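(* Let $b>0$ and let $\psi(x;a,\sigma)$ be as in the context, with $\psi^{(k)}$ its $k$-th derivative in $x$. For every $k\in\mathbb{N}\cup\{0\}$ and $x\in\mathbb{R}$, $$\frac{\partial}{\partial \sigma}\Big(\frac{\psi^{(k)}(x;a,\sigma)}{\psi^{(k+1)}(x;a,\sigma)}\Big)=\frac{(a-bx)\big[\psi^{(k+1)}(x;a,\sigma)^2-\psi^{(k)}(x;a,\sigma)\psi^{(k+2)}(x;a,\sigma)\big]+b\,\psi^{(k+1)}(x;a,\sigma)\psi^{(k)}(x;a,\sigma)}{b\sigma\,\psi^{(k+1)}(x;a,\sigma)^2}>0.$$
   Context: Constants $b>0$, $\rho>0$; parameters $a\in\mathbb{R}$, $\sigma>0$. For $\beta<0$, $D_\beta(x)=\frac{e^{-x^2/4}}{\Gamma(-\beta)}\int_0^\infty t^{-\beta-1}e^{-t^2/2-xt}dt$, and $\psi(x;a,\sigma)=e^{\frac{(bx-a)^2}{2\sigma^2 b}}D_{-\rho/b}\big(-\frac{bx-a}{\sigma b}\sqrt{2b}\big)$, the positive strictly increasing fundamental solution of $\frac12\sigma^2u''+(a-bx)u'-\rho u=0$. *)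

theory Defs
  imports "HOL-Analysis.Analysis"
begin

text \<open>Parabolic cylinder function D_beta(x) for beta < 0, via its integral representation.\<close>
definition parabD :: "real \<Rightarrow> real \<Rightarrow> real" where
  "parabD \<beta> x = exp (- x\<^sup>2 / 4) / Gamma (- \<beta>) *
     (\<integral>t\<in>{0<..}. t powr (- \<beta> - 1) * exp (- t\<^sup>2 / 2 - x * t) \<partial>lborel)"

definition psi :: "real \<Rightarrow> real \<Rightarrow> real \<Rightarrow> real \<Rightarrow> real \<Rightarrow> real" where
  "psi b \<rho> a \<sigma> x = exp ((b * x - a)\<^sup>2 / (2 * \<sigma>\<^sup>2 * b)) *
     parabD (- \<rho> / b) (- (b * x - a) / (\<sigma> * b) * sqrt (2 * b))"

definition psid :: "nat \<Rightarrow> real \<Rightarrow> real \<Rightarrow> real \<Rightarrow> real \<Rightarrow> real \<Rightarrow> real" where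
  "psid k b \<rho> a \<sigma> x = (deriv ^^ k) (psi b \<rho> a \<sigma>) x"

end

theory Submission
  imports Defs "HOL-Real_Asymp.Real_Asymp"
begin

(* Substituting the integral representation of D_{-rho/b}, the Gaussian prefactor of psi cancels:
   psi(x) = M_{rho/b}(L) / Gamma(rho/b) with L = (b x - a) sqrt(2 b) / (sigma b), where
   M_p(v) = int_0^oo t^(p-1) exp(-t^2/2 + v t) dt.  Since d/dv M_p = M_(p+1), the k-th derivative is
   psi^(k)(x) = (sqrt(2 b) / sigma)^k M_q(L) / Gamma(rho/b) with q = rho/b + k, and for fixed x the
   quotient psi^(k) / psi^(k+1), as a function of sigma, is sigma M_q(w/sigma) / (sqrt(2 b) M_(q+1)(w/sigma))
   with w = sigma L independent of sigma.  Its derivative at v = w/sigma is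
   (M_q M_(q+1) - v (M_(q+1)^2 - M_q M_(q+2))) / (sqrt(2 b) M_(q+1)^2).  Integration by parts gives
   M_(p+2) = v M_(p+1) + p M_p, which turns the numerator into M_q M_(q+3) - M_(q+1) M_(q+2); with
   r = M_(q+1) / M_q this is M_q times the integral of t^(q-1) exp(-t^2/2 + v t) (t - r)^2 (t + r)
   over t > 0, hence positive. *)

lemma set_integrable_Gamma_kernel:
  fixes p :: real
  assumes "p > 0"
  shows "set_integrable lborel {0<..} (\<lambda>t. t powr (p - 1) / exp t)"
proof -
  have "(\<lambda>t. t powr (p - 1) / exp t) absolutely_integrable_on {0..}"
    using Gamma_integral_real[OF assms] by (intro nonnegative_absolutely_integrable_1) auto
  then have "set_integrable lebesgue {0<..} (\<lambda>t. t powr (p - 1) / exp t)"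
    by (rule set_integrable_subset) auto
  then show ?thesis
    unfolding set_integrable_def
    by (subst (asm) integrable_completion)
      (auto intro!: borel_measurable_continuous_on_indicator continuous_intros)
qed

lemma emeasure_lborel_Ioi_nonzero [simp]: "emeasure lborel {a<..} \<noteq> 0" for a :: real
proof -
  have "emeasure lborel {a<..<a + 1} \<le> emeasure lborel {a<..}"
    by (rule emeasure_mono) auto
  then show ?thesis
    by auto
qed

lemma set_integral_pos:
  fixes f :: "'a \<Rightarrow> real"
  assumes int: "set_integrable M A f" and A: "A \<in> sets M" "emeasure M A \<noteq> 0"
    and pos: "AE t in M. t \<in> A \<longrightarrow> f t > 0"
  shows "(\<integral>t\<in>A. f t \<partial>M) > 0"
proof -
  have nonneg: "AE t in M. 0 \<le> indicator A t *\<^sub>R f t"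
    using pos by eventually_elim (auto simp: indicator_def)
  then have "(\<integral>t\<in>A. f t \<partial>M) \<ge> 0"
    unfolding set_lebesgue_integral_def by (rule integral_nonneg_AE)
  moreover have "(\<integral>t\<in>A. f t \<partial>M) \<noteq> 0"
  proof
    assume "(\<integral>t\<in>A. f t \<partial>M) = 0"
    then have "AE t in M. indicator A t *\<^sub>R f t = 0"
      using int nonneg unfolding set_lebesgue_integral_def set_integrable_def
      by (subst (asm) integral_nonneg_eq_0_iff_AE) auto
    with pos have "AE t in M. t \<notin> A"
      by eventually_elim (auto simp: indicator_def split: if_splits)
    with A show False
      by (subst (asm) AE_iff_measurable[OF A(1)]) (auto dest: sets.sets_into_space)
  qed
  ultimately show ?thesis
    by linarith
qed

lemma LIMSEQ_set_integral_difference_quotient: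
  fixes f :: "real \<Rightarrow> 'a \<Rightarrow> real"
  assumes int: "\<And>y. set_integrable M A (f y)"
    and meas: "set_borel_measurable M A f'"
    and deriv: "\<And>t. t \<in> A \<Longrightarrow> ((\<lambda>y. f y t) has_real_derivative f' t) (at v)"
    and dom: "set_integrable M A w"
    and bound: "\<And>i t. t \<in> A \<Longrightarrow> \<bar>f (X i) t - f v t\<bar> \<le> \<bar>X i - v\<bar> * w t"
    and X: "\<And>i. X i \<noteq> v" "X \<longlonglongrightarrow> v"
  shows "(\<lambda>i. ((\<integral>t\<in>A. f (X i) t \<partial>M) - (\<integral>t\<in>A. f v t \<partial>M)) / (X i - v))
    \<longlonglongrightarrow> (\<integral>t\<in>A. f' t \<partial>M)"
proof -
  define s where "s i t = indicator A t *\<^sub>R ((f (X i) t - f v t) / (X i - v))" for i t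
  have "(\<lambda>i. integral\<^sup>L M (s i)) \<longlonglongrightarrow> (\<integral>t\<in>A. f' t \<partial>M)"
    unfolding set_lebesgue_integral_def
  proof (rule integral_dominated_convergence)
    have "(\<lambda>t. indicator A t *\<^sub>R f y t) \<in> borel_measurable M" for y
      using int[of y] by (simp add: set_integrable_def borel_measurable_integrable)
    moreover have "s i = (\<lambda>t. (indicator A t *\<^sub>R f (X i) t - indicator A t *\<^sub>R f v t) / (X i - v))" for i
      by (auto simp: s_def fun_eq_iff split: split_indicator)
    ultimately show "s i \<in> borel_measurable M" for i
      by (auto intro!: borel_measurable_divide borel_measurable_diff)
    show "AE t in M. (\<lambda>i. s i t) \<longlonglongrightarrow> indicator A t *\<^sub>R f' t"
    proof (rule AE_I2)
      fix t
      show "(\<lambda>i. s i t) \<longlonglongrightarrow> indicator A t *\<^sub>R f' t"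
      proof (cases "t \<in> A")
        case True
        then have "((\<lambda>y. (f y t - f v t) / (y - v)) \<longlongrightarrow> f' t) (at v)"
          using deriv by (simp add: has_field_derivative_iff)
        with X show ?thesis
          using True unfolding tendsto_at_iff_sequentially by (simp add: s_def o_def)
      qed (simp add: s_def)
    qed
    show "AE t in M. norm (s i t) \<le> indicator A t *\<^sub>R w t" for i
      using X(1) bound[of _ i]
      by (intro AE_I2) (auto simp: s_def divide_le_eq mult.commute split: split_indicator)
  qed (use meas dom in \<open>auto simp: set_borel_measurable_def set_integrable_def\<close>)
  moreover have "integral\<^sup>L M (s i) = ((\<integral>t\<in>A. f (X i) t \<partial>M) - (\<integral>t\<in>A. f v t \<partial>M)) / (X i - v)" for i
    using set_integral_diff(2)[OF int int, of "X i" v]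
    by (simp add: s_def[abs_def] set_lebesgue_integral_def)
  ultimately show ?thesis
    by simp
qed

lemma has_real_derivative_set_integral:
  fixes f :: "real \<Rightarrow> 'a \<Rightarrow> real"
  assumes "B > 0"
    and int: "\<And>y. set_integrable M A (f y)"
    and meas: "set_borel_measurable M A f'"
    and deriv: "\<And>t. t \<in> A \<Longrightarrow> ((\<lambda>y. f y t) has_real_derivative f' t) (at v)"
    and dom: "set_integrable M A w"
    and bound: "\<And>y t. t \<in> A \<Longrightarrow> \<bar>y - v\<bar> < B \<Longrightarrow> \<bar>f y t - f v t\<bar> \<le> \<bar>y - v\<bar> * w t"
  shows "((\<lambda>y. \<integral>t\<in>A. f y t \<partial>M) has_real_derivative (\<integral>t\<in>A. f' t \<partial>M)) (at v)"
proof -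
  have lim: "((\<lambda>y. ((\<integral>t\<in>A. f y t \<partial>M) - (\<integral>t\<in>A. f v t \<partial>M)) / (y - v))
      \<longlongrightarrow> (\<integral>t\<in>A. f' t \<partial>M)) (at v within ball v B)"
    unfolding tendsto_at_iff_sequentially o_def
  proof (intro allI impI)
    fix X :: "nat \<Rightarrow> real"
    assume X: "\<forall>i. X i \<in> ball v B - {v}" "X \<longlonglongrightarrow> v"
    show "(\<lambda>i. ((\<integral>t\<in>A. f (X i) t \<partial>M) - (\<integral>t\<in>A. f v t \<partial>M)) / (X i - v))
      \<longlonglongrightarrow> (\<integral>t\<in>A. f' t \<partial>M)"
    proof (rule LIMSEQ_set_integral_difference_quotient[OF int meas deriv dom])
      fix i t
      assume "t \<in> A"
      have "\<bar>X i - v\<bar> < B"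
        using X(1) by (auto simp: dist_real_def abs_minus_commute)
      then show "\<bar>f (X i) t - f v t\<bar> \<le> \<bar>X i - v\<bar> * w t"
        by (rule bound[OF \<open>t \<in> A\<close>])
    qed (use X in auto)
  qed
  have "at v within ball v B = at v"
    using \<open>B > 0\<close> by (intro at_within_open) auto
  with lim show ?thesis
    by (simp add: has_field_derivative_iff)
qed

definition gauss_kernel :: "real \<Rightarrow> real \<Rightarrow> real \<Rightarrow> real" where
  "gauss_kernel p v t = t powr (p - 1) * exp (- t\<^sup>2 / 2 + v * t)"

definition gauss_moment :: "real \<Rightarrow> real \<Rightarrow> real" where
  "gauss_moment p v = (\<integral>t\<in>{0<..}. gauss_kernel p v t \<partial>lborel)"

lemma gauss_kernel_pos: "t > 0 \<Longrightarrow> gauss_kernel p v t > 0"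
  by (simp add: gauss_kernel_def)

lemma gauss_kernel_mono: "t > 0 \<Longrightarrow> v \<le> w \<Longrightarrow> gauss_kernel p v t \<le> gauss_kernel p w t"
  by (simp add: gauss_kernel_def mult_right_mono)

lemma gauss_kernel_mult_power:
  assumes "t > 0"
  shows "gauss_kernel p v t * t ^ k = gauss_kernel (p + real k) v t"
proof -
  have "t powr (p + real k - 1) = t powr (p - 1) * t powr real k"
    by (simp add: algebra_simps flip: powr_add)
  then show ?thesis
    using assms by (simp add: gauss_kernel_def powr_realpow mult_ac)
qed

lemma gauss_kernel_le_Gamma_kernel:
  assumes "t > 0"
  shows "gauss_kernel p v t \<le> exp ((v + 1)\<^sup>2 / 2) * (t powr (p - 1) / exp t)"
proof -
  have "- t\<^sup>2 / 2 + v * t \<le> (v + 1)\<^sup>2 / 2 - t"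
    using zero_le_power2[of "t - (v + 1)"] by (simp add: power2_eq_square algebra_simps)
  then have "exp (- t\<^sup>2 / 2 + v * t) \<le> exp ((v + 1)\<^sup>2 / 2) / exp t"
    by (simp flip: exp_diff)
  then have "t powr (p - 1) * exp (- t\<^sup>2 / 2 + v * t)
      \<le> t powr (p - 1) * (exp ((v + 1)\<^sup>2 / 2) / exp t)"
    by (rule mult_left_mono) simp
  then show ?thesis
    by (simp add: gauss_kernel_def mult_ac)
qed

lemma set_integrable_gauss_kernel [simp]:
  assumes "p > 0"
  shows "set_integrable lborel {0<..} (gauss_kernel p v)"
proof (rule set_integrable_bound[OF set_integrable_mult_right[OF set_integrable_Gamma_kernel[OF assms]]])
  show "set_borel_measurable lborel {0<..} (gauss_kernel p v)"
    unfolding set_borel_measurable_def gauss_kernel_def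
    by (auto intro!: borel_measurable_continuous_on_indicator continuous_intros)
  show "AE t in lborel. t \<in> {0<..} \<longrightarrow>
      norm (gauss_kernel p v t) \<le> norm (exp ((v + 1)\<^sup>2 / 2) * (t powr (p - 1) / exp t))"
    using gauss_kernel_le_Gamma_kernel gauss_kernel_pos by (auto intro!: AE_I2 simp: less_imp_le)
qed

lemma gauss_moment_pos: "p > 0 \<Longrightarrow> gauss_moment p v > 0"
  unfolding gauss_moment_def
  by (rule set_integral_pos) (auto intro!: AE_I2 simp: gauss_kernel_pos)

lemma gauss_kernel_has_derivative:
  assumes "t > 0"
  shows "((\<lambda>y. gauss_kernel p y t) has_real_derivative gauss_kernel (p + 1) v t) (at v)"
proof -
  have "((\<lambda>y. gauss_kernel p y t) has_real_derivative gauss_kernel p v t * t) (at v)"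
    unfolding gauss_kernel_def by (auto intro!: derivative_eq_intros)
  then show ?thesis
    using gauss_kernel_mult_power[OF assms, of p v 1] by simp
qed

lemma gauss_kernel_diff_le:
  assumes "t > 0" "\<bar>y - v\<bar> \<le> B"
  shows "\<bar>gauss_kernel p y t - gauss_kernel p v t\<bar> \<le> \<bar>y - v\<bar> * gauss_kernel (p + 1) (\<bar>v\<bar> + B) t"
proof -
  have "norm (gauss_kernel p y t - gauss_kernel p v t)
      \<le> gauss_kernel (p + 1) (\<bar>v\<bar> + B) t * norm (y - v)"
  proof (rule field_differentiable_bound[of "cball v B"])
    show "((\<lambda>y. gauss_kernel p y t) has_field_derivative gauss_kernel (p + 1) z t) (at z within cball v B)"
      for z
      using gauss_kernel_has_derivative[OF assms(1)] by (rule has_field_derivative_at_within)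
    show "norm (gauss_kernel (p + 1) z t) \<le> gauss_kernel (p + 1) (\<bar>v\<bar> + B) t" if "z \<in> cball v B" for z
    proof -
      have "z \<le> \<bar>v\<bar> + B"
        using that by (auto simp: dist_real_def)
      then show ?thesis
        using assms(1) by (simp add: abs_of_pos gauss_kernel_pos gauss_kernel_mono)
    qed
  qed (use assms in \<open>auto simp: dist_real_def abs_minus_commute\<close>)
  then show ?thesis
    by (simp add: mult.commute)
qed

lemma gauss_moment_has_derivative:
  assumes "p > 0"
  shows "(gauss_moment p has_real_derivative gauss_moment (p + 1) v) (at v)"
  unfolding gauss_moment_def
proof (rule has_real_derivative_set_integral[where B = 1 and w = "gauss_kernel (p + 1) (\<bar>v\<bar> + 1)"])
  show "set_integrable lborel {0<..} (gauss_kernel p y)" for y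
    using assms by simp
  show "set_integrable lborel {0<..} (gauss_kernel (p + 1) (\<bar>v\<bar> + 1))"
    using assms by simp
  show "set_borel_measurable lborel {0<..} (gauss_kernel (p + 1) v)"
    unfolding set_borel_measurable_def gauss_kernel_def
    by (auto intro!: borel_measurable_continuous_on_indicator continuous_intros)
  show "((\<lambda>y. gauss_kernel p y t) has_real_derivative gauss_kernel (p + 1) v t) (at v)"
    if "t \<in> {0<..}" for t
    using that by (simp add: gauss_kernel_has_derivative)
  show "\<bar>gauss_kernel p y t - gauss_kernel p v t\<bar> \<le> \<bar>y - v\<bar> * gauss_kernel (p + 1) (\<bar>v\<bar> + 1) t"
    if "t \<in> {0<..}" "\<bar>y - v\<bar> < 1" for y t
    using that by (intro gauss_kernel_diff_le) auto
qed simp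

lemma has_real_derivative_gauss_moment [derivative_intros]:
  assumes "p > 0" "(g has_real_derivative g') (at x within S)"
  shows "((\<lambda>x. gauss_moment p (g x)) has_real_derivative gauss_moment (p + 1) (g x) * g') (at x within S)"
  using DERIV_chain2[OF gauss_moment_has_derivative[OF assms(1)] assms(2)] .

lemma gauss_moment_recurrence:
  assumes p: "p > 0"
  shows "gauss_moment (p + 2) v = v * gauss_moment (p + 1) v + p * gauss_moment p v"
proof -
  define F where "F t = t powr p * exp (- t\<^sup>2 / 2 + v * t)" for t
  define f where "f t = p * gauss_kernel p v t + v * gauss_kernel (p + 1) v t - gauss_kernel (p + 2) v t"
    for t
  have "(LBINT t=ereal 0..\<infinity>. f t) = 0 - 0"
  proof (rule interval_integral_FTC_integrable)
    fix t assume "ereal 0 < ereal t" "ereal t < \<infinity>"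
    then have t: "t > 0" by simp
    have "(F has_real_derivative p * t powr (p - 1) * exp (- t\<^sup>2 / 2 + v * t)
            + t powr p * (exp (- t\<^sup>2 / 2 + v * t) * (- (2 * t) / 2 + v))) (at t)"
      unfolding F_def using t by (auto intro!: derivative_eq_intros simp: power2_eq_square)
    moreover have "p * t powr (p - 1) * exp (- t\<^sup>2 / 2 + v * t)
            + t powr p * (exp (- t\<^sup>2 / 2 + v * t) * (- (2 * t) / 2 + v)) = f t"
      using t by (simp add: f_def gauss_kernel_def powr_add algebra_simps)
    ultimately show "(F has_vector_derivative f t) (at t)"
      by (simp add: has_real_derivative_iff_has_vector_derivative)
    show "isCont f t"
      unfolding f_def gauss_kernel_def using t by (auto intro!: continuous_intros)
  next
    show "set_integrable lborel (einterval (ereal 0) \<infinity>) f"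
      unfolding f_def using p by simp
    have "((\<lambda>t. t powr p) \<longlongrightarrow> 0) (at_right 0)"
      using p by (intro tendsto_zero_powrI tendsto_ident_at eventually_at_rightI[of 0 1]) auto
    then have "(F \<longlongrightarrow> 0 * exp (- 0\<^sup>2 / 2 + v * 0)) (at_right 0)"
      unfolding F_def by (intro tendsto_intros tendsto_ident_at) auto
    then show "((F \<circ> real_of_ereal) \<longlongrightarrow> 0) (at_right (ereal 0))"
      unfolding ereal_tendsto_simps by simp
    have "(F \<longlongrightarrow> 0) at_top"
      unfolding F_def by real_asymp
    then show "((F \<circ> real_of_ereal) \<longlongrightarrow> 0) (at_left \<infinity>)"
      unfolding ereal_tendsto_simps .
  qed simp
  then have "(\<integral>t\<in>{0<..}. f t \<partial>lborel) = 0"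
    by (simp add: interval_integral_to_infinity_eq)
  moreover have "(\<integral>t\<in>{0<..}. f t \<partial>lborel)
      = p * gauss_moment p v + v * gauss_moment (p + 1) v - gauss_moment (p + 2) v"
    unfolding f_def gauss_moment_def using p by simp
  ultimately show ?thesis
    by simp
qed

lemma gauss_moment_cross_less:
  assumes p: "p > 0"
  shows "gauss_moment (p + 1) v * gauss_moment (p + 2) v < gauss_moment p v * gauss_moment (p + 3) v"
proof -
  define m where "m q = gauss_moment (p + real q) v" for q :: nat
  have m_pos: "m q > 0" for q
    unfolding m_def using p by (intro gauss_moment_pos) simp
  define r where "r = m 1 / m 0"
  have "r > 0"
    using m_pos by (simp add: r_def)
  define g where "g t = gauss_kernel (p + 3) v t - r * gauss_kernel (p + 2) v t
    - r\<^sup>2 * gauss_kernel (p + 1) v t + r ^ 3 * gauss_kernel p v t" for t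
  have g_eq: "g t = gauss_kernel p v t * ((t - r)\<^sup>2 * (t + r))" if "t > 0" for t
  proof -
    have "gauss_kernel (p + real k) v t = gauss_kernel p v t * t ^ k" for k
      using gauss_kernel_mult_power[OF that] by simp
    from this[of 3] this[of 2] this[of 1] show ?thesis
      by (simp add: g_def power2_eq_square power3_eq_cube algebra_simps)
  qed
  have "0 < (\<integral>t\<in>{0<..}. g t \<partial>lborel)"
  proof (rule set_integral_pos)
    show "set_integrable lborel {0<..} g"
      unfolding g_def using p by simp
    show "AE t in lborel. t \<in> {0<..} \<longrightarrow> 0 < g t"
      using AE_lborel_singleton[of r]
      by eventually_elim (use \<open>r > 0\<close> in \<open>auto simp: g_eq gauss_kernel_pos\<close>)
  qed auto
  also have "(\<integral>t\<in>{0<..}. g t \<partial>lborel) = m 3 - r * m 2 - r\<^sup>2 * m 1 + r ^ 3 * m 0"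
    unfolding g_def m_def gauss_moment_def using p by simp
  also have "\<dots> = (m 0 * m 3 - m 1 * m 2) / m 0"
    using m_pos[of 0] by (simp add: r_def field_simps power2_eq_square power3_eq_cube)
  finally show ?thesis
    using m_pos[of 0] by (simp add: m_def zero_less_divide_iff)
qed

definition gauss_moment_ratio_slope :: "real \<Rightarrow> real \<Rightarrow> real" where
  "gauss_moment_ratio_slope p v = (gauss_moment p v * gauss_moment (p + 1) v
     - v * ((gauss_moment (p + 1) v)\<^sup>2 - gauss_moment p v * gauss_moment (p + 2) v))
     / (gauss_moment (p + 1) v)\<^sup>2"

lemma has_real_derivative_scaled_gauss_moment_ratio:
  assumes p: "p > 0" and "\<sigma> \<noteq> 0"
  shows "((\<lambda>s. s * gauss_moment p (w / s) / gauss_moment (p + 1) (w / s))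
    has_real_derivative gauss_moment_ratio_slope p (w / \<sigma>)) (at \<sigma>)"
proof -
  have "gauss_moment (p + 1) (w / \<sigma>) > 0"
    using p by (intro gauss_moment_pos) simp
  moreover have "gauss_moment (p + 1 + 1) (w / \<sigma>) = gauss_moment (p + 2) (w / \<sigma>)"
    by (simp add: add.assoc)
  ultimately show ?thesis
    using assms unfolding gauss_moment_ratio_slope_def
    by (auto intro!: derivative_eq_intros simp: field_simps power2_eq_square)
qed

lemma gauss_moment_ratio_slope_pos:
  assumes p: "p > 0"
  shows "gauss_moment_ratio_slope p v > 0"
proof -
  have rec2: "gauss_moment (p + 2) v = v * gauss_moment (p + 1) v + p * gauss_moment p v"
    using gauss_moment_recurrence[OF p] .
  have rec3: "gauss_moment (p + 3) v = v * gauss_moment (p + 2) v + (p + 1) * gauss_moment (p + 1) v"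
    using gauss_moment_recurrence[of "p + 1" v] p by (simp add: add.assoc)
  have "gauss_moment p v * gauss_moment (p + 1) v
      - v * ((gauss_moment (p + 1) v)\<^sup>2 - gauss_moment p v * gauss_moment (p + 2) v)
      = gauss_moment p v * gauss_moment (p + 3) v - gauss_moment (p + 1) v * gauss_moment (p + 2) v"
    unfolding rec3 by (simp add: rec2 power2_eq_square algebra_simps)
  then show ?thesis
    using gauss_moment_cross_less[OF p, of v] gauss_moment_pos[of "p + 1" v] p
    by (simp add: gauss_moment_ratio_slope_def)
qed

lemma psi_eq_gauss_moment:
  assumes "b > 0"
  shows "psi b \<rho> a s x = gauss_moment (\<rho> / b) ((b * x - a) / (s * b) * sqrt (2 * b)) / Gamma (\<rho> / b)"
proof -
  define L where "L = (b * x - a) / (s * b) * sqrt (2 * b)"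
  have L_sq: "(- L)\<^sup>2 = ((b * x - a) / (s * b))\<^sup>2 * (2 * b)"
    unfolding L_def power2_minus power_mult_distrib using assms by simp
  have "(b * x - a)\<^sup>2 / (2 * s\<^sup>2 * b) + - (- L)\<^sup>2 / 4 = 0"
    unfolding L_sq using assms
    by (cases "s = 0") (simp_all add: power_divide power_mult_distrib power2_eq_square field_simps)
  then have gauss_cancel: "exp ((b * x - a)\<^sup>2 / (2 * s\<^sup>2 * b)) * exp (- (- L)\<^sup>2 / 4) = 1"
    by (simp flip: exp_add)
  have "- (b * x - a) / (s * b) * sqrt (2 * b) = - L"
    unfolding L_def by (simp only: minus_divide_left mult_minus_left)
  then have "psi b \<rho> a s x
      = exp ((b * x - a)\<^sup>2 / (2 * s\<^sup>2 * b)) * exp (- (- L)\<^sup>2 / 4) * gauss_moment (\<rho> / b) L / Gamma (\<rho> / b)"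
    unfolding psi_def parabD_def gauss_moment_def gauss_kernel_def by (simp add: mult_ac)
  also have "\<dots> = gauss_moment (\<rho> / b) L / Gamma (\<rho> / b)"
    by (simp only: gauss_cancel mult_1_left)
  finally show ?thesis
    unfolding L_def .
qed

lemma deriv_iterate_gauss_moment_affine:
  assumes "p > 0"
  shows "(deriv ^^ k) (\<lambda>x. C * gauss_moment p (c * x + d))
    = (\<lambda>x. C * c ^ k * gauss_moment (p + real k) (c * x + d))"
proof (induction k)
  case (Suc k)
  have "((\<lambda>x. C * c ^ k * gauss_moment (p + real k) (c * x + d)) has_real_derivative
      C * c ^ Suc k * gauss_moment (p + real (Suc k)) (c * x + d)) (at x)" for x
    using assms by (auto intro!: derivative_eq_intros simp: add_ac mult_ac)
  then show ?case
    by (simp add: Suc.IH DERIV_imp_deriv fun_eq_iff)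
qed simp

lemma psid_eq_gauss_moment:
  assumes "b > 0" "\<rho> > 0"
  shows "psid k b \<rho> a s x = (sqrt (2 * b) / s) ^ k
    * gauss_moment (\<rho> / b + real k) ((b * x - a) / b * sqrt (2 * b) / s) / Gamma (\<rho> / b)"
proof -
  define c where "c = sqrt (2 * b) / s"
  define d where "d = - a / (s * b) * sqrt (2 * b)"
  have arg: "(b * y - a) / (s * b) * sqrt (2 * b) = c * y + d" "(b * y - a) / b * sqrt (2 * b) / s = c * y + d"
    for y using assms by (cases "s = 0"; simp add: c_def d_def field_simps)+
  have psi_fun: "psi b \<rho> a s = (\<lambda>y. inverse (Gamma (\<rho> / b)) * gauss_moment (\<rho> / b) (c * y + d))"
    unfolding fun_eq_iff psi_eq_gauss_moment[OF assms(1)] arg by (simp add: divide_inverse mult.commute)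
  have "psid k b \<rho> a s = (deriv ^^ k) (psi b \<rho> a s)"
    by (simp add: psid_def fun_eq_iff)
  also have "\<dots> = (\<lambda>y. inverse (Gamma (\<rho> / b)) * c ^ k * gauss_moment (\<rho> / b + real k) (c * y + d))"
    unfolding psi_fun using assms by (intro deriv_iterate_gauss_moment_affine) simp
  finally show ?thesis
    unfolding arg by (simp add: c_def divide_inverse mult_ac)
qed

lemma psid_ratio_eq:
  fixes a b \<rho> s x :: real
  assumes "b > 0" "\<rho> > 0"
  defines "w \<equiv> (b * x - a) / b * sqrt (2 * b)"
  shows "psid k b \<rho> a s x / psid (Suc k) b \<rho> a s x
    = s * gauss_moment (\<rho> / b + k) (w / s) / gauss_moment (\<rho> / b + k + 1) (w / s) / sqrt (2 * b)"
proof -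
  define G where "G = Gamma (\<rho> / b)"
  have "gauss_moment (\<rho> / b + k + 1) (w / s) > 0" "G > 0"
    using assms by (simp_all add: G_def gauss_moment_pos Gamma_real_pos add_pos_nonneg)
  moreover have "\<rho> / b + real (Suc k) = \<rho> / b + k + 1"
    by simp
  ultimately show ?thesis
    unfolding psid_eq_gauss_moment[OF assms(1,2)] G_def[symmetric] w_def using assms
    by (cases "s = 0") (simp_all add: field_simps)
qed

lemma psid_slope_eq:
  fixes a b \<rho> \<sigma> x :: real
  assumes "b > 0" "\<rho> > 0" "\<sigma> > 0"
  defines "w \<equiv> (b * x - a) / b * sqrt (2 * b)"
  shows "((a - b * x) * ((psid (Suc k) b \<rho> a \<sigma> x)\<^sup>2 - psid k b \<rho> a \<sigma> x * psid (Suc (Suc k)) b \<rho> a \<sigma> x)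
      + b * psid (Suc k) b \<rho> a \<sigma> x * psid k b \<rho> a \<sigma> x) / (b * \<sigma> * (psid (Suc k) b \<rho> a \<sigma> x)\<^sup>2)
    = gauss_moment_ratio_slope (\<rho> / b + k) (w / \<sigma>) / sqrt (2 * b)"
proof -
  define c where "c = sqrt (2 * b)"
  define P where "P = (c / \<sigma>) ^ k / Gamma (\<rho> / b)"
  define m where "m j = gauss_moment (\<rho> / b + k + real j) (w / \<sigma>)" for j
  have "c > 0" "P > 0" "m 1 > 0"
    using assms by (simp_all add: c_def P_def m_def Gamma_real_pos gauss_moment_pos add_pos_nonneg)
  have shift: "a - b * x = - (w * b / c)"
    using assms \<open>c > 0\<close> by (simp add: w_def c_def field_simps)
  have "psid (k + j) b \<rho> a \<sigma> x = (c / \<sigma>) ^ j * P * m j" for j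
    unfolding psid_eq_gauss_moment[OF assms(1,2)] P_def m_def w_def c_def
    by (simp add: power_add field_simps)
  from this[of 0] this[of 1] this[of 2]
  have psid_\<sigma>: "psid k b \<rho> a \<sigma> x = P * m 0" "psid (Suc k) b \<rho> a \<sigma> x = c / \<sigma> * P * m 1"
    "psid (Suc (Suc k)) b \<rho> a \<sigma> x = c / \<sigma> * (c / \<sigma> * P) * m 2"
    by (simp_all add: numeral_2_eq_2 mult_ac)
  show ?thesis
    unfolding shift psid_\<sigma> gauss_moment_ratio_slope_def c_def[symmetric]
    using \<open>c > 0\<close> \<open>P > 0\<close> \<open>m 1 > 0\<close> assms
    by (simp add: m_def field_simps power2_eq_square add.assoc)
qed

theorem lemma5p4:
  fixes b \<rho> a \<sigma> x :: real and k :: nat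
  assumes "b > 0" and "\<rho> > 0" and "\<sigma> > 0"
  shows "((\<lambda>s. psid k b \<rho> a s x / psid (Suc k) b \<rho> a s x) has_real_derivative
           ((a - b * x) * ((psid (Suc k) b \<rho> a \<sigma> x)\<^sup>2
                            - psid k b \<rho> a \<sigma> x * psid (Suc (Suc k)) b \<rho> a \<sigma> x)
            + b * psid (Suc k) b \<rho> a \<sigma> x * psid k b \<rho> a \<sigma> x)
           / (b * \<sigma> * (psid (Suc k) b \<rho> a \<sigma> x)\<^sup>2)) (at \<sigma>)
     \<and> ((a - b * x) * ((psid (Suc k) b \<rho> a \<sigma> x)\<^sup>2
                            - psid k b \<rho> a \<sigma> x * psid (Suc (Suc k)) b \<rho> a \<sigma> x)
            + b * psid (Suc k) b \<rho> a \<sigma> x * psid k b \<rho> a \<sigma> x)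
           / (b * \<sigma> * (psid (Suc k) b \<rho> a \<sigma> x)\<^sup>2) > 0"
proof -
  define w where "w = (b * x - a) / b * sqrt (2 * b)"
  define q where "q = \<rho> / b + real k"
  have "q > 0"
    using assms by (simp add: q_def add_pos_nonneg)
  have "(\<lambda>s. psid k b \<rho> a s x / psid (Suc k) b \<rho> a s x)
      = (\<lambda>s. s * gauss_moment q (w / s) / gauss_moment (q + 1) (w / s) / sqrt (2 * b))"
    using psid_ratio_eq[OF assms(1,2)] by (simp add: fun_eq_iff w_def q_def)
  moreover have "((\<lambda>s. s * gauss_moment q (w / s) / gauss_moment (q + 1) (w / s) / sqrt (2 * b))
      has_real_derivative gauss_moment_ratio_slope q (w / \<sigma>) / sqrt (2 * b)) (at \<sigma>)"
    using \<open>q > 0\<close> assms(3) by (intro DERIV_cdivide has_real_derivative_scaled_gauss_moment_ratio) simp_all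
  moreover have "gauss_moment_ratio_slope q (w / \<sigma>) / sqrt (2 * b) > 0"
    using gauss_moment_ratio_slope_pos[OF \<open>q > 0\<close>] assms(1) by simp
  ultimately show ?thesis
    using psid_slope_eq[OF assms] by (simp add: w_def q_def)
qed

end
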